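(* Let $G$ be a connected graph with diameter $d\in\{3,4\}$. If $\dim(G)=n(G)-d$, then $D(G)=n(G)-2$ if and only if $G$ is isomorphic to $P_4$.
   Context: All graphs are finite and simple; $n(G)=|V(G)|$; $P_4$ is the path on four vertices; the diameter is the largest distance between two vertices. For a connected graph $G$ with shortest-path distance $d_G$, a set $S\subseteq V(G)$ is resolving if for any two distinct vertices $x,y$ there is $s\in S$ with $d_G(x,s)\neq d_G(y,s)$; the metric dimension $\dim(G)$ is the minimum size of a resolving set. A distinguishing coloring of a graph $G$ is a (not necessarily proper) vertex coloring such that the only automorphism of $G$ mapping every vertex to a vertex of the same color is the identity; the distinguishing number $D(G)$ is the minimum number of colors in a distinguishing coloring of $G$. *)

theory Defs
  imports Main
begin

definition simple_graph :: "'a set \<Rightarrow> ('a \<Rightarrow> 'a \<Rightarrow> bool) \<Rightarrow> bool" where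
  "simple_graph V E \<longleftrightarrow> finite V \<and> (\<forall>x y. E x y \<longrightarrow> x \<in> V \<and> y \<in> V)
     \<and> (\<forall>x y. E x y \<longrightarrow> E y x) \<and> (\<forall>x. \<not> E x x)"

definition walk :: "'a set \<Rightarrow> ('a \<Rightarrow> 'a \<Rightarrow> bool) \<Rightarrow> 'a list \<Rightarrow> bool" where
  "walk V E xs \<longleftrightarrow> xs \<noteq> [] \<and> set xs \<subseteq> V \<and> (\<forall>i. Suc i < length xs \<longrightarrow> E (xs ! i) (xs ! Suc i))"

definition connected_graph :: "'a set \<Rightarrow> ('a \<Rightarrow> 'a \<Rightarrow> bool) \<Rightarrow> bool" where
  "connected_graph V E \<longleftrightarrow> V \<noteq> {} \<and>
     (\<forall>x\<in>V. \<forall>y\<in>V. \<exists>xs. walk V E xs \<and> hd xs = x \<and> last xs = y)"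

definition gdist :: "'a set \<Rightarrow> ('a \<Rightarrow> 'a \<Rightarrow> bool) \<Rightarrow> 'a \<Rightarrow> 'a \<Rightarrow> nat" where
  "gdist V E x y = (LEAST n. \<exists>xs. walk V E xs \<and> hd xs = x \<and> last xs = y \<and> length xs = Suc n)"

definition diameter :: "'a set \<Rightarrow> ('a \<Rightarrow> 'a \<Rightarrow> bool) \<Rightarrow> nat" where
  "diameter V E = Max {gdist V E x y | x y. x \<in> V \<and> y \<in> V}"

definition resolving :: "'a set \<Rightarrow> ('a \<Rightarrow> 'a \<Rightarrow> bool) \<Rightarrow> 'a set \<Rightarrow> bool" where
  "resolving V E S \<longleftrightarrow> S \<subseteq> V \<and>
     (\<forall>x\<in>V. \<forall>y\<in>V. x \<noteq> y \<longrightarrow> (\<exists>s\<in>S. gdist V E x s \<noteq> gdist V E y s))"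

definition metric_dim :: "'a set \<Rightarrow> ('a \<Rightarrow> 'a \<Rightarrow> bool) \<Rightarrow> nat" where
  "metric_dim V E = (LEAST k. \<exists>S. resolving V E S \<and> card S = k)"

definition automorphism :: "'a set \<Rightarrow> ('a \<Rightarrow> 'a \<Rightarrow> bool) \<Rightarrow> ('a \<Rightarrow> 'a) \<Rightarrow> bool" where
  "automorphism V E f \<longleftrightarrow> bij_betw f V V \<and> (\<forall>x\<in>V. \<forall>y\<in>V. E x y \<longleftrightarrow> E (f x) (f y))"

definition distinguishing_coloring ::
  "'a set \<Rightarrow> ('a \<Rightarrow> 'a \<Rightarrow> bool) \<Rightarrow> nat \<Rightarrow> ('a \<Rightarrow> nat) \<Rightarrow> bool" where
  "distinguishing_coloring V E k c \<longleftrightarrow> c ` V \<subseteq> {..<k} \<and>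
     (\<forall>f. automorphism V E f \<and> (\<forall>x\<in>V. c (f x) = c x) \<longrightarrow> (\<forall>x\<in>V. f x = x))"

definition distinguishing_number :: "'a set \<Rightarrow> ('a \<Rightarrow> 'a \<Rightarrow> bool) \<Rightarrow> nat" where
  "distinguishing_number V E = (LEAST k. \<exists>c. distinguishing_coloring V E k c)"

definition iso_P4 :: "'a set \<Rightarrow> ('a \<Rightarrow> 'a \<Rightarrow> bool) \<Rightarrow> bool" where
  "iso_P4 V E \<longleftrightarrow> (\<exists>f. bij_betw f V {0..<4::nat} \<and>
     (\<forall>x\<in>V. \<forall>y\<in>V. E x y \<longleftrightarrow> (f x = Suc (f y) \<or> f y = Suc (f x))))"

end

theory Submission
  imports Defs
begin

text \<open>A diametral pair of vertices yields a geodesic path v0 v1 v2 v3. If G has only four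
  vertices, G is this path, i.e. P4, whose distinguishing number is 2 = n - 2. Otherwise pick a
  fifth vertex w. Give one colour to the three path vertices other than one end p (which p
  resolves), a second colour to p and w, and pairwise distinct colours to all remaining vertices.
  A colour-preserving automorphism must then fix p, unless it swaps p and w, and that is excluded
  by choosing the end p according to the neighbours of w on the path; so D(G) \<le> n - 3.\<close>

lemma walk_iff_successively: "walk V E xs \<longleftrightarrow> xs \<noteq> [] \<and> set xs \<subseteq> V \<and> successively E xs"
  unfolding walk_def successively_conv_nth by blast

lemma successively_take: "successively P xs \<Longrightarrow> successively P (take n xs)"
  by (metis append_take_drop_id successively_append_iff)

lemma successively_drop: "successively P xs \<Longrightarrow> successively P (drop n xs)"
  by (metis append_take_drop_id successively_append_iff)

lemma walk_take: "walk V E xs \<Longrightarrow> 0 < n \<Longrightarrow> walk V E (take n xs)"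
  unfolding walk_iff_successively using set_take_subset
  by (fastforce intro: successively_take)

lemma walk_drop: "walk V E xs \<Longrightarrow> n < length xs \<Longrightarrow> walk V E (drop n xs)"
  unfolding walk_iff_successively using set_drop_subset
  by (fastforce intro: successively_drop)

lemma walk_rev: "(\<And>x y. E x y \<Longrightarrow> E y x) \<Longrightarrow> walk V E xs \<Longrightarrow> walk V E (rev xs)"
  unfolding walk_iff_successively by (auto intro: successively_mono)

lemma walk_append:
  assumes "walk V E xs" "walk V E ys" "last xs = hd ys"
  shows "walk V E (xs @ tl ys)"
proof -
  obtain y ys' where "ys = y # ys'" using assms(2) by (cases ys) (auto simp: walk_def)
  then show ?thesis using assms unfolding walk_iff_successively
    by (auto simp: successively_append_iff successively_Cons)
qed

lemma gdist_le_walk: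
  assumes "walk V E xs" "hd xs = x" "last xs = y"
  shows "gdist V E x y \<le> length xs - 1"
proof -
  have "length xs = Suc (length xs - 1)" using assms(1) by (simp add: walk_def)
  then show ?thesis unfolding gdist_def using assms by (intro Least_le) blast
qed

lemma gdist_nth_le_walk:
  assumes "walk V E xs" "i \<le> j" "j < length xs"
  shows "gdist V E (xs ! i) (xs ! j) \<le> j - i"
proof -
  define ys where "ys = take (Suc (j - i)) (drop i xs)"
  have len: "length ys = Suc (j - i)" and nth: "\<And>k. k \<le> j - i \<Longrightarrow> ys ! k = xs ! (i + k)"
    using assms unfolding ys_def by auto
  then have "ys \<noteq> []" by auto
  then have "hd ys = xs ! i" "last ys = xs ! j"
    using len nth[of 0] nth[of "j - i"] assms by (simp_all add: hd_conv_nth last_conv_nth)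
  moreover have "walk V E ys"
    using assms unfolding ys_def by (intro walk_take walk_drop) auto
  ultimately have "gdist V E (xs ! i) (xs ! j) \<le> length ys - 1"
    by (intro gdist_le_walk)
  then show ?thesis using len by simp
qed

lemma automorphism_image: "automorphism V E f \<Longrightarrow> x \<in> V \<Longrightarrow> f x \<in> V"
  by (auto simp: automorphism_def bij_betw_def)

lemma walk_map_automorphism:
  assumes "automorphism V E f" "walk V E xs"
  shows "walk V E (map f xs)"
proof -
  have "successively (\<lambda>a b. E (f a) (f b)) xs"
    using assms unfolding walk_iff_successively automorphism_def
    by (auto intro: successively_mono[where P = E])
  then show ?thesis
    using assms automorphism_image[OF assms(1)] unfolding walk_iff_successively successively_map
    by auto
qed

lemma automorphism_inv_into:
  assumes "automorphism V E f"
  shows "automorphism V E (inv_into V f)"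
proof -
  have f: "bij_betw f V V" using assms by (simp add: automorphism_def)
  have "E x y \<longleftrightarrow> E (inv_into V f x) (inv_into V f y)" if "x \<in> V" "y \<in> V" for x y
  proof -
    have "inv_into V f x \<in> V" "inv_into V f y \<in> V"
      using that f by (auto simp: bij_betw_def inv_into_into)
    with assms have "E (inv_into V f x) (inv_into V f y) \<longleftrightarrow>
        E (f (inv_into V f x)) (f (inv_into V f y))"
      by (simp add: automorphism_def)
    then show ?thesis using that f by (simp add: bij_betw_def f_inv_into_f)
  qed
  then show ?thesis using bij_betw_inv_into[OF f] by (simp add: automorphism_def)
qed

locale connected_simple_graph =
  fixes V :: "'a set" and E :: "'a \<Rightarrow> 'a \<Rightarrow> bool"
  assumes simple: "simple_graph V E" and connected: "connected_graph V E"
begin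

abbreviation dist :: "'a \<Rightarrow> 'a \<Rightarrow> nat" where
  "dist \<equiv> gdist V E"

lemma finite_V: "finite V"
  using simple by (simp add: simple_graph_def)

lemma adjacent_sym: "E x y \<Longrightarrow> E y x"
  using simple by (simp add: simple_graph_def)

lemma adjacent_irrefl: "\<not> E x x"
  using simple by (simp add: simple_graph_def)

lemma shortest_walk_exists:
  assumes "x \<in> V" "y \<in> V"
  obtains xs where "walk V E xs" "hd xs = x" "last xs = y" "length xs = Suc (dist x y)"
proof -
  obtain xs where "walk V E xs" "hd xs = x" "last xs = y"
    using connected assms unfolding connected_graph_def by blast
  then have "\<exists>n xs. walk V E xs \<and> hd xs = x \<and> last xs = y \<and> length xs = Suc n"
    by (intro exI[of _ "length xs - 1"] exI[of _ xs]) (auto simp: walk_def)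
  from LeastI_ex[OF this] show ?thesis using that unfolding gdist_def by blast
qed

lemma dist_sym:
  assumes "x \<in> V" "y \<in> V"
  shows "dist x y = dist y x"
proof -
  have "dist b a \<le> dist a b" if ab: "a \<in> V" "b \<in> V" for a b
  proof -
    obtain xs where xs: "walk V E xs" "hd xs = a" "last xs = b" "length xs = Suc (dist a b)"
      using shortest_walk_exists[OF ab] .
    have "dist b a \<le> length (rev xs) - 1"
      using xs adjacent_sym by (intro gdist_le_walk walk_rev) (auto simp: walk_def hd_rev last_rev)
    then show ?thesis using xs by simp
  qed
  then show ?thesis using assms by (meson le_antisym)
qed

lemma dist_triangle:
  assumes "x \<in> V" "y \<in> V" "z \<in> V"
  shows "dist x z \<le> dist x y + dist y z"
proof -
  obtain xs where xs: "walk V E xs" "hd xs = x" "last xs = y" "length xs = Suc (dist x y)"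
    using shortest_walk_exists assms by metis
  obtain ys where ys: "walk V E ys" "hd ys = y" "last ys = z" "length ys = Suc (dist y z)"
    using shortest_walk_exists assms by metis
  have "last (xs @ tl ys) = z"
    using xs ys by (cases ys) (auto simp: walk_def)
  then have "dist x z \<le> length (xs @ tl ys) - 1"
    using xs ys by (intro gdist_le_walk walk_append) (auto simp: walk_def)
  then show ?thesis using xs ys by simp
qed

lemma dist_self: "x \<in> V \<Longrightarrow> dist x x = 0"
  using gdist_le_walk[of V E "[x]" x x] by (simp add: walk_def)

lemma dist_eq_0_iff:
  assumes "x \<in> V" "y \<in> V"
  shows "dist x y = 0 \<longleftrightarrow> x = y"
proof
  assume "dist x y = 0"
  obtain xs where "hd xs = x" "last xs = y" "length xs = Suc (dist x y)"
    using shortest_walk_exists[OF assms] .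
  with \<open>dist x y = 0\<close> show "x = y" by (cases xs) auto
qed (use dist_self assms in auto)

lemma adjacent_iff_dist_eq_1:
  assumes "x \<in> V" "y \<in> V"
  shows "E x y \<longleftrightarrow> dist x y = 1"
proof
  assume "E x y"
  then have "dist x y \<le> 1" "x \<noteq> y"
    using gdist_le_walk[of V E "[x, y]" x y] assms adjacent_irrefl by (auto simp: walk_def)
  then show "dist x y = 1" using dist_eq_0_iff assms by fastforce
next
  assume "dist x y = 1"
  obtain xs where xs: "walk V E xs" "hd xs = x" "last xs = y" "length xs = Suc (dist x y)"
    using shortest_walk_exists[OF assms] .
  then obtain a b where "xs = [a, b]"
    using \<open>dist x y = 1\<close> by (cases xs; cases "tl xs") auto
  then show "E x y" using xs by (auto simp: walk_def)
qed

lemma dist_automorphism_le: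
  assumes "automorphism V E f" "x \<in> V" "y \<in> V"
  shows "dist (f x) (f y) \<le> dist x y"
proof -
  obtain xs where xs: "walk V E xs" "hd xs = x" "last xs = y" "length xs = Suc (dist x y)"
    using shortest_walk_exists[OF assms(2,3)] .
  have "dist (f x) (f y) \<le> length (map f xs) - 1"
    using xs walk_map_automorphism[OF assms(1) xs(1)]
    by (intro gdist_le_walk) (auto simp: walk_def hd_map last_map)
  then show ?thesis using xs by simp
qed

lemma dist_automorphism:
  assumes "automorphism V E f" "x \<in> V" "y \<in> V"
  shows "dist (f x) (f y) = dist x y"
proof -
  have "bij_betw f V V" using assms(1) by (simp add: automorphism_def)
  then have "inv_into V f (f x) = x" "inv_into V f (f y) = y"
    using assms by (auto simp: bij_betw_def)
  moreover have "dist (inv_into V f (f x)) (inv_into V f (f y)) \<le> dist (f x) (f y)"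
    using assms automorphism_image[OF assms(1)]
    by (intro dist_automorphism_le automorphism_inv_into) auto
  ultimately show ?thesis using dist_automorphism_le[OF assms] by simp
qed

lemma diameter_attained:
  obtains x y where "x \<in> V" "y \<in> V" "dist x y = diameter V E"
proof -
  let ?D = "{dist x y | x y. x \<in> V \<and> y \<in> V}"
  have D: "?D = case_prod dist ` (V \<times> V)"
    by auto
  have "finite ?D"
    unfolding D using finite_V by simp
  moreover have "?D \<noteq> {}"
    unfolding D using connected by (simp add: connected_graph_def)
  ultimately have "diameter V E \<in> ?D"
    unfolding diameter_def by (rule Max_in)
  then obtain x y where "diameter V E = dist x y" "x \<in> V" "y \<in> V"
    by (auto simp only: mem_Collect_eq)
  with that show ?thesis by simp
qed

lemma dist_nth_shortest_walk:
  assumes "walk V E xs" "length xs = Suc (dist (hd xs) (last xs))" "i \<le> j" "j < length xs"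
  shows "dist (xs ! i) (xs ! j) = j - i"
proof -
  define n where "n = length xs - 1"
  have ends: "hd xs = xs ! 0" "last xs = xs ! n"
    using assms(1) unfolding n_def by (auto simp: walk_def hd_conv_nth last_conv_nth)
  have inV: "xs ! k \<in> V" if "k < length xs" for k
    using assms(1) that by (auto simp: walk_def)
  have ijn: "i < length xs" "j < length xs" "0 < length xs" "n < length xs" "j \<le> n"
    using assms unfolding n_def by auto
  have "n = dist (xs ! 0) (xs ! n)"
    using assms(2) ends unfolding n_def by simp
  also have "\<dots> \<le> dist (xs ! 0) (xs ! i) + dist (xs ! i) (xs ! n)"
    using inV ijn by (intro dist_triangle) auto
  also have "\<dots> \<le> dist (xs ! 0) (xs ! i) + (dist (xs ! i) (xs ! j) + dist (xs ! j) (xs ! n))"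
    using inV ijn by (intro add_left_mono dist_triangle) auto
  finally have "n \<le> dist (xs ! 0) (xs ! i) + dist (xs ! i) (xs ! j) + dist (xs ! j) (xs ! n)"
    by simp
  moreover have "dist (xs ! 0) (xs ! i) \<le> i" "dist (xs ! j) (xs ! n) \<le> n - j"
      "dist (xs ! i) (xs ! j) \<le> j - i"
    using gdist_nth_le_walk[OF assms(1), of 0 i] gdist_nth_le_walk[OF assms(1), of j n]
      gdist_nth_le_walk[OF assms(1), of i j] assms(3) ijn
    by simp_all
  ultimately show ?thesis using assms(3,4) unfolding n_def by linarith
qed

definition geodesic_P4 :: "'a \<Rightarrow> 'a \<Rightarrow> 'a \<Rightarrow> 'a \<Rightarrow> bool" where
  "geodesic_P4 v0 v1 v2 v3 \<longleftrightarrow> v0 \<in> V \<and> v1 \<in> V \<and> v2 \<in> V \<and> v3 \<in> V \<and>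
     dist v0 v1 = 1 \<and> dist v1 v2 = 1 \<and> dist v2 v3 = 1 \<and>
     dist v0 v2 = 2 \<and> dist v1 v3 = 2 \<and> dist v0 v3 = 3"

lemma ex_geodesic_P4:
  assumes "diameter V E \<ge> 3"
  obtains v0 v1 v2 v3 where "geodesic_P4 v0 v1 v2 v3"
proof -
  obtain x y where xy: "x \<in> V" "y \<in> V" "dist x y = diameter V E"
    using diameter_attained .
  obtain xs where xs: "walk V E xs" "hd xs = x" "last xs = y" "length xs = Suc (dist x y)"
    using shortest_walk_exists[OF xy(1,2)] .
  have "xs ! k \<in> V" if "k \<le> 3" for k
    using xs that assms xy(3) by (auto simp: walk_def)
  moreover have "dist (xs ! i) (xs ! j) = j - i" if "i \<le> j" "j \<le> 3" for i j
    using dist_nth_shortest_walk[of xs i j] xs that assms xy(3) by simp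
  ultimately have "geodesic_P4 (xs ! 0) (xs ! 1) (xs ! 2) (xs ! 3)"
    unfolding geodesic_P4_def by simp
  then show ?thesis using that by blast
qed

lemma geodesic_P4_rev:
  assumes "geodesic_P4 v0 v1 v2 v3"
  shows "geodesic_P4 v3 v2 v1 v0"
  using assms dist_sym[of v0 v1] dist_sym[of v1 v2] dist_sym[of v2 v3] dist_sym[of v0 v2]
    dist_sym[of v1 v3] dist_sym[of v0 v3]
  unfolding geodesic_P4_def by simp

lemma geodesic_P4_distinct:
  assumes "geodesic_P4 v0 v1 v2 v3"
  shows "distinct [v0, v1, v2, v3]"
  using assms dist_self[of v0] dist_self[of v1] dist_self[of v2] unfolding geodesic_P4_def
  by auto

lemma distinguishing_coloring_resolved_class:
  assumes X: "X \<subseteq> V" and pw: "p \<in> V" "w \<in> V" "p \<notin> X" "w \<notin> X" "p \<noteq> w"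
    and resolves: "inj_on (\<lambda>x. dist x p) X"
    and profiles: "(\<lambda>x. dist x p) ` X \<noteq> (\<lambda>x. dist x w) ` X"
  shows "\<exists>c. distinguishing_coloring V E (card V - card X) c"
proof -
  define W where "W = V - X - {p, w}"
  have "finite X" using X finite_V finite_subset by blast
  have card_W: "card W = card V - card X - 2"
    using X pw finite_V \<open>finite X\<close> unfolding W_def by (simp add: card_Diff_subset)
  have "card X + 2 \<le> card V"
    using card_mono[OF finite_V, of "insert p (insert w X)"] X pw \<open>finite X\<close> by simp
  have "finite W" unfolding W_def using finite_V by simp
  then obtain h where h: "bij_betw h W {0..<card W}"
    using ex_bij_betw_finite_nat by blast
  define c where "c x = (if x \<in> X then 0 else if x = p \<or> x = w then 1 else h x + 2)" for x
  have "c x < card V - card X" if "x \<in> V" for x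
  proof (cases "x \<in> W")
    case True
    then have "h x < card W" using h by (auto simp: bij_betw_def)
    then show ?thesis using True card_W \<open>card X + 2 \<le> card V\<close> unfolding c_def W_def by auto
  next
    case False
    then show ?thesis using that \<open>card X + 2 \<le> card V\<close> unfolding c_def W_def by auto
  qed
  then have "c ` V \<subseteq> {..<card V - card X}" by auto
  moreover have "\<forall>x\<in>V. f x = x" if f: "automorphism V E f" "\<forall>x\<in>V. c (f x) = c x" for f
  proof -
    have f_V: "f x \<in> V" if "x \<in> V" for x using automorphism_image[OF f(1) that] .
    have f_inj: "inj_on f V" using f(1) by (simp add: automorphism_def bij_betw_def)
    have f_W: "f x = x" if "x \<in> W" for x
    proof -
      have "f x \<in> W" "h (f x) = h x"
        using f(2) that f_V unfolding c_def W_def by (auto split: if_splits)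
      then show ?thesis using h that by (auto simp: bij_betw_def dest: inj_onD)
    qed
    have f_X: "f ` X = X"
    proof (rule endo_inj_surj[OF \<open>finite X\<close>])
      show "f ` X \<subseteq> X" using f(2) X f_V unfolding c_def by (force split: if_splits)
      show "inj_on f X" using f_inj X by (rule inj_on_subset)
    qed
    have "f p \<in> {p, w}" "f w \<in> {p, w}"
      using f(2) pw f_V unfolding c_def by (auto split: if_splits)
    moreover have "f p \<noteq> w"
    proof
      assume "f p = w"
      have "(\<lambda>x. dist x w) ` X = (\<lambda>x. dist x (f p)) ` f ` X"
        unfolding f_X \<open>f p = w\<close> ..
      also have "\<dots> = (\<lambda>x. dist (f x) (f p)) ` X"
        by (rule image_image)
      also have "\<dots> = (\<lambda>x. dist x p) ` X"
        using dist_automorphism[OF f(1)] X pw by (intro image_cong) auto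
      finally show False using profiles by simp
    qed
    ultimately have "f p = p" "f w = w"
      using f_inj pw by (auto dest: inj_onD)
    moreover have "f x = x" if "x \<in> X" for x
    proof -
      have "dist (f x) p = dist x p"
        using dist_automorphism[OF f(1)] X pw that \<open>f p = p\<close> by force
      then show ?thesis using inj_onD[OF resolves] f_X that by blast
    qed
    ultimately show ?thesis using f_W unfolding W_def by blast
  qed
  ultimately show ?thesis unfolding distinguishing_coloring_def by blast
qed

lemma distinguishing_coloring_geodesic_P4_end:
  assumes geo: "geodesic_P4 v0 v1 v2 v3" and w: "w \<in> V" "w \<notin> {v0, v1, v2, v3}"
    and adj: "E v1 w \<or> (\<not> E v0 w \<and> \<not> E v1 w \<and> \<not> E v2 w)"
  shows "\<exists>c. distinguishing_coloring V E (card V - 3) c"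
proof -
  have V: "v0 \<in> V" "v1 \<in> V" "v2 \<in> V" "v3 \<in> V"
    and d: "dist v0 v3 = 3" "dist v1 v3 = 2" "dist v2 v3 = 1" "dist v0 v1 = 1" "dist v1 v2 = 1"
    using geo unfolding geodesic_P4_def by auto
  have distinct: "distinct [v0, v1, v2, v3]" by (rule geodesic_P4_distinct[OF geo])
  have adj': "dist v1 w = 1 \<or> (dist v0 w \<noteq> 1 \<and> dist v1 w \<noteq> 1 \<and> dist v2 w \<noteq> 1)"
    using adj V w adjacent_iff_dist_eq_1 by auto
  have "(\<lambda>x. dist x v3) ` {v0, v1, v2} \<noteq> (\<lambda>x. dist x w) ` {v0, v1, v2}"
  proof (cases "dist v1 w = 1")
    case True
    have "dist v0 w \<le> 2" "dist v2 w \<le> 2"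
      using dist_triangle[of v0 v1 w] dist_triangle[of v2 v1 w] dist_sym[of v2 v1] True d V w
      by auto
    then have "3 \<notin> (\<lambda>x. dist x w) ` {v0, v1, v2}" using True by auto
    moreover have "3 \<in> (\<lambda>x. dist x v3) ` {v0, v1, v2}" using d by simp
    ultimately show ?thesis by metis
  next
    case False
    then have "1 \<notin> (\<lambda>x. dist x w) ` {v0, v1, v2}" using adj' by auto
    moreover have "1 \<in> (\<lambda>x. dist x v3) ` {v0, v1, v2}" using d by simp
    ultimately show ?thesis by metis
  qed
  moreover have "inj_on (\<lambda>x. dist x v3) {v0, v1, v2}"
    using d by auto
  ultimately have "\<exists>c. distinguishing_coloring V E (card V - card {v0, v1, v2}) c"
    using V w distinct by (intro distinguishing_coloring_resolved_class) auto
  moreover have "card {v0, v1, v2} = 3" using distinct by simp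
  ultimately show ?thesis by simp
qed

lemma distinguishing_coloring_card_minus_3:
  assumes "diameter V E \<ge> 3" "card V \<ge> 5"
  shows "\<exists>c. distinguishing_coloring V E (card V - 3) c"
proof -
  obtain v0 v1 v2 v3 where geo: "geodesic_P4 v0 v1 v2 v3"
    using ex_geodesic_P4[OF assms(1)] .
  have "card {v0, v1, v2, v3} = 4"
    using geodesic_P4_distinct[OF geo] by simp
  then have "\<not> V \<subseteq> {v0, v1, v2, v3}"
    using card_mono[of "{v0, v1, v2, v3}" V] assms(2) by auto
  then obtain w where w: "w \<in> V" "w \<notin> {v0, v1, v2, v3}"
    by blast
  consider "E v1 w \<or> (\<not> E v0 w \<and> \<not> E v1 w \<and> \<not> E v2 w)"
    | "E v2 w \<or> (\<not> E v3 w \<and> \<not> E v2 w \<and> \<not> E v1 w)"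
    | "E v0 w" "E v3 w"
    by blast
  then show ?thesis
  proof cases
    case 1
    then show ?thesis using distinguishing_coloring_geodesic_P4_end[OF geo w] by blast
  next
    case 2
    then show ?thesis using distinguishing_coloring_geodesic_P4_end[OF geodesic_P4_rev[OF geo]] w
      by auto
  next
    case 3
    then have "dist v0 w = 1" "dist w v3 = 1"
      using geo w adjacent_iff_dist_eq_1 adjacent_sym[of v3 w] unfolding geodesic_P4_def by auto
    then have "dist v0 v3 \<le> 2"
      using dist_triangle[of v0 w v3] geo w unfolding geodesic_P4_def by auto
    then show ?thesis using geo unfolding geodesic_P4_def by simp
  qed
qed

lemma iso_P4_if_card_le_4:
  assumes "diameter V E \<ge> 3" "card V \<le> 4"
  shows "iso_P4 V E"
proof -
  obtain v0 v1 v2 v3 where geo: "geodesic_P4 v0 v1 v2 v3"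
    using ex_geodesic_P4[OF assms(1)] .
  then have distinct: "distinct [v0, v1, v2, v3]" by (rule geodesic_P4_distinct)
  have sub: "{v0, v1, v2, v3} \<subseteq> V" using geo unfolding geodesic_P4_def by auto
  with distinct assms(2) have V: "V = {v0, v1, v2, v3}"
    using card_subset_eq[OF finite_V sub] card_mono[OF finite_V sub] by simp
  define f where "f x = (if x = v0 then 0 else if x = v1 then 1 else if x = v2 then 2 else 3 :: nat)"
    for x
  have "bij_betw f V {0..<4}"
    unfolding bij_betw_def V f_def using distinct by (auto simp: inj_on_def)
  moreover have "E x y \<longleftrightarrow> f x = Suc (f y) \<or> f y = Suc (f x)" if "x \<in> V" "y \<in> V" for x y
  proof -
    have dists: "dist v0 v1 = 1" "dist v1 v2 = 1" "dist v2 v3 = 1" "dist v0 v2 = 2" "dist v1 v3 = 2"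
      "dist v0 v3 = 3" "dist v1 v0 = 1" "dist v2 v1 = 1" "dist v3 v2 = 1" "dist v2 v0 = 2"
      "dist v3 v1 = 2" "dist v3 v0 = 3"
      "dist v0 v0 = 0" "dist v1 v1 = 0" "dist v2 v2 = 0" "dist v3 v3 = 0"
      using geo geodesic_P4_rev[OF geo] dist_self sub unfolding geodesic_P4_def by auto
    have "x \<in> {v0, v1, v2, v3}" "y \<in> {v0, v1, v2, v3}" using that V by auto
    then show ?thesis
      unfolding adjacent_iff_dist_eq_1[OF that] using distinct
      by (elim insertE emptyE) (simp_all add: f_def dists eq_commute[of v1 v0] eq_commute[of v2 v0]
        eq_commute[of v3 v0] eq_commute[of v2 v1] eq_commute[of v3 v1] eq_commute[of v3 v2])
  qed
  ultimately show ?thesis unfolding iso_P4_def by blast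
qed

end

lemma distinguishing_number_le:
  "distinguishing_coloring V E k c \<Longrightarrow> distinguishing_number V E \<le> k"
  unfolding distinguishing_number_def by (auto intro: Least_le)

lemma automorphism_trivial_if_distinguishing_coloring_le_1:
  assumes "distinguishing_coloring V E k c" "k \<le> 1" "automorphism V E f" "x \<in> V"
  shows "f x = x"
proof -
  have "c y = 0" if "y \<in> V" for y
    using assms(1,2) that unfolding distinguishing_coloring_def by fastforce
  then show ?thesis
    using assms automorphism_image unfolding distinguishing_coloring_def by metis
qed

context
  fixes V :: "'a set" and E :: "'a \<Rightarrow> 'a \<Rightarrow> bool" and f :: "'a \<Rightarrow> nat"
  assumes f: "bij_betw f V {0..<4}"
    and adjacent_iff: "\<And>x y. x \<in> V \<Longrightarrow> y \<in> V \<Longrightarrow> E x y \<longleftrightarrow> f x = Suc (f y) \<or> f y = Suc (f x)"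
begin

private abbreviation vertex :: "nat \<Rightarrow> 'a" where
  "vertex \<equiv> inv_into V f"

private lemma vertex_in_V: "i < 4 \<Longrightarrow> vertex i \<in> V"
  using f by (auto simp: bij_betw_def inv_into_into)

private lemma f_vertex: "i < 4 \<Longrightarrow> f (vertex i) = i"
  using f by (auto simp: bij_betw_def f_inv_into_f)

private lemma f_less_4: "x \<in> V \<Longrightarrow> f x < 4"
  using f by (auto simp: bij_betw_def)

lemma P4_reflection_automorphism: "automorphism V E (\<lambda>x. vertex (3 - f x))"
proof -
  have "bij_betw (\<lambda>i. 3 - i) {0..<4} {0..<4::nat}"
    by (rule bij_betw_byWitness[where f' = "\<lambda>i. 3 - i"]) auto
  then have "bij_betw (vertex \<circ> (\<lambda>i. 3 - i) \<circ> f) V V"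
    using f bij_betw_inv_into[OF f] by (auto intro: bij_betw_trans)
  moreover have "E x y \<longleftrightarrow> E (vertex (3 - f x)) (vertex (3 - f y))" if "x \<in> V" "y \<in> V" for x y
    using that f_less_4[OF that(1)] f_less_4[OF that(2)]
    by (simp add: adjacent_iff vertex_in_V f_vertex) linarith
  ultimately show ?thesis unfolding automorphism_def comp_def by blast
qed

lemma P4_end_coloring: "distinguishing_coloring V E 2 (\<lambda>x. if f x = 0 then 1 else 0)"
proof -
  have index: "f (h x) = f x" if h: "automorphism V E h" "\<forall>x\<in>V. (if f (h x) = 0 then 1 else 0 :: nat) =
      (if f x = 0 then 1 else 0)" and x: "x \<in> V" for h x
    using x
  proof (induction "f x" arbitrary: x rule: less_induct)
    \<comment> \<open>h fixes the coloured end, and then each next vertex along the path, because the other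
      neighbour of its predecessor is already fixed\<close>
    case less
    have h_V: "\<And>y. y \<in> V \<Longrightarrow> h y \<in> V" using automorphism_image[OF h(1)] .
    have h_inj: "inj_on h V" using h(1) by (simp add: automorphism_def bij_betw_def)
    show ?case
    proof (cases "f x")
      case 0
      then show ?thesis using h(2) less.prems by (auto split: if_splits)
    next
      case (Suc j)
      have j: "j < 4" "vertex j \<in> V" "f (vertex j) = j" "f (h (vertex j)) = j"
        using Suc f_less_4[OF less.prems] vertex_in_V f_vertex less.hyps[of "vertex j"] by auto
      have "E x (vertex j)"
        using adjacent_iff[OF less.prems j(2)] Suc j(3) by simp
      then have "E (h x) (h (vertex j))"
        using h(1) less.prems j(2) unfolding automorphism_def by blast
      then have "f (h x) = Suc j \<or> Suc (f (h x)) = j"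
        using adjacent_iff h_V less.prems j by auto
      moreover have "Suc (f (h x)) \<noteq> j"
      proof
        assume k: "Suc (f (h x)) = j"
        then have "f (h (vertex (f (h x)))) = f (h x)"
          using less.hyps[of "vertex (f (h x))"] j vertex_in_V f_vertex Suc by auto
        then have "x = vertex (f (h x))"
          using f h_V h_inj less.prems vertex_in_V k j(1)
          by (metis Suc_lessD bij_betw_def inj_on_eq_iff)
        then show False using k Suc f_vertex j(1) by (metis Suc_lessD lessI less_irrefl_nat)
      qed
      ultimately show ?thesis using Suc by simp
    qed
  qed
  show ?thesis
    unfolding distinguishing_coloring_def
  proof (intro conjI allI impI ballI)
    fix h x
    assume h: "automorphism V E h \<and> (\<forall>x\<in>V. (if f (h x) = 0 then 1 else 0 :: nat) =
      (if f x = 0 then 1 else 0))" and x: "x \<in> V"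
    then have "f (h x) = f x" by (intro index) auto
    moreover have "h x \<in> V" using automorphism_image[OF conjunct1[OF h] x] .
    ultimately show "h x = x"
      using f x by (metis bij_betw_def inj_on_eq_iff)
  qed auto
qed

end

lemma distinguishing_number_iso_P4:
  assumes "iso_P4 V E"
  shows "distinguishing_number V E = 2"
proof -
  obtain f where f: "bij_betw f V {0..<4}"
    and adj: "\<And>x y. x \<in> V \<Longrightarrow> y \<in> V \<Longrightarrow> E x y \<longleftrightarrow> f x = Suc (f y) \<or> f y = Suc (f x)"
    using assms unfolding iso_P4_def by blast
  let ?end = "inv_into V f 0"
  have "?end \<in> V" "f (inv_into V f 3) = 3" "f ?end = 0"
    using f by (auto simp: bij_betw_def inv_into_into f_inv_into_f)
  then have "inv_into V f (3 - f ?end) \<noteq> ?end" by auto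
  then have "\<not> distinguishing_coloring V E k c" if "k < 2" for k c
    using automorphism_trivial_if_distinguishing_coloring_le_1 P4_reflection_automorphism[OF f adj]
      \<open>?end \<in> V\<close> that by fastforce
  then show ?thesis
    unfolding distinguishing_number_def using P4_end_coloring[OF f adj]
    by (intro Least_equality) (auto simp: not_less[symmetric])
qed

lemma card_iso_P4: "iso_P4 V E \<Longrightarrow> card V = 4"
  unfolding iso_P4_def by (auto dest: bij_betw_same_card)

theorem lemma4p12:
  fixes V :: "'a set" and E :: "'a \<Rightarrow> 'a \<Rightarrow> bool"
  assumes "simple_graph V E"
    and "connected_graph V E"
    and "diameter V E \<in> {3, 4}"
    and "metric_dim V E = card V - diameter V E"
  shows "distinguishing_number V E = card V - 2 \<longleftrightarrow> iso_P4 V E"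
proof
  interpret connected_simple_graph V E using assms(1,2) by unfold_locales
  have diameter: "diameter V E \<ge> 3" using assms(3) by auto
  assume D: "distinguishing_number V E = card V - 2"
  show "iso_P4 V E"
  proof (cases "card V \<le> 4")
    case True
    then show ?thesis using iso_P4_if_card_le_4[OF diameter] by simp
  next
    case False
    then have "distinguishing_number V E \<le> card V - 3"
      using distinguishing_coloring_card_minus_3[OF diameter] distinguishing_number_le by fastforce
    then show ?thesis using D False by simp
  qed
next
  assume "iso_P4 V E"
  then show "distinguishing_number V E = card V - 2"
    by (simp add: distinguishing_number_iso_P4 card_iso_P4)
qed

end
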